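(* Let $L:\mathbb{R}^d\times\mathbb{R}^{d+1}\to\mathbb{R}$ be such that $L(w,z)$ is convex in $w$ for every $z$, let $\nabla_1 L(w,z)$ denote a (fixed choice of) sub-gradient of $L(\cdot,z)$ at $w$, and assume there are constants $A,B\ge0$ with $\|\nabla_1 L(w,z)\|^2\le A L(w,z)+B$ for all $w\in\mathbb{R}^d$, $z\in\mathbb{R}^{d+1}$. Let $z_1,\dots,z_n\in\mathbb{R}^{d+1}$ be training data, let $g\ge 0$, and let $\eta>0$ with $1-0.5A\eta>0$. For $w\in\mathbb{R}^d$ and $\gamma\ge0$ set \[ R(w,\gamma)=\frac1n\sum_{i=1}^n L(w,z_i)+\gamma\|w\|_1 .\] Let $\hat w_1=w_1=0$ and define recursively for $t=1,2,\ldots$ \[ w_{t+1}=T\big(w_t-\eta\nabla_1 L(w_t,z_{i_t}),\ g\eta\big),\qquad \hat w_{t+1}=\hat w_t+\frac{w_{t+1}-\hat w_t}{t+1}, \] where $i_1,i_2,\ldots$ are independent and each uniformly distributed on $\{1,\dots,n\}$. Then for every $T\ge1$ and every $\bar w\in\mathbb{R}^d$, \[ \mathbf{E}_{i_1,\dots,i_T}\Big[(1-0.5A\eta)\,R\Big(\hat w_T,\tfrac{g}{1-0.5A\eta}\Big)\Big] \le \mathbf{E}_{i_1,\dots,i_T}\Big[\frac{1-0.5A\eta}{T}\sum_{i=1}^T R\Big(w_i,\tfrac{g}{1-0.5A\eta}\Big)\Big] \le \frac{\eta}{2}B+\frac{\|\bar w\|^2}{2\eta T}+R(\bar w,g). 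\]
   Context: $\|\cdot\|$ is the Euclidean norm and $\|\cdot\|_1$ the $1$-norm. For $v\in\mathbb{R}^d$ and $\alpha\ge0$, $T(v,\alpha)=(T(v_1,\alpha),\dots,T(v_d,\alpha))$ with $T(v_j,\alpha)=\max(0,v_j-\alpha)$ if $v_j>0$ and $T(v_j,\alpha)=\min(0,v_j+\alpha)$ otherwise. *)

theory Defs
  imports "HOL-Analysis.Analysis"
begin

definition soft_thr :: "real \<Rightarrow> real \<Rightarrow> real" where
  "soft_thr v \<alpha> = (if v > 0 then max 0 (v - \<alpha>) else min 0 (v + \<alpha>))"

definition soft_thr_vec :: "real ^ 'd \<Rightarrow> real \<Rightarrow> real ^ 'd" where
  "soft_thr_vec v \<alpha> = (\<chi> j. soft_thr (v $ j) \<alpha>)"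

definition norm1 :: "real ^ 'd \<Rightarrow> real" where
  "norm1 w = (\<Sum>j\<in>UNIV. \<bar>w $ j\<bar>)"

definition is_subgradient :: "(real ^ 'd \<Rightarrow> real) \<Rightarrow> real ^ 'd \<Rightarrow> real ^ 'd \<Rightarrow> bool" where
  "is_subgradient f w v \<longleftrightarrow> (\<forall>u. f u \<ge> f w + v \<bullet> (u - w))"

definition emp_risk :: "(real ^ 'd \<Rightarrow> 'z \<Rightarrow> real) \<Rightarrow> (nat \<Rightarrow> 'z) \<Rightarrow> nat \<Rightarrow> real ^ 'd \<Rightarrow> real \<Rightarrow> real" where
  "emp_risk L z n w \<gamma> = (1 / real n) * (\<Sum>i=1..n. L w (z i)) + \<gamma> * norm1 w"

text \<open>Iterates w_t (1-based: w 1 = 0, w (t+1) = T(w_t - eta G(w_t, z_{i_t}), g eta)),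
  driven by the index sequence i. The value at 0 is an irrelevant dummy.\<close>
fun sgd_w :: "(real ^ 'd \<Rightarrow> 'z \<Rightarrow> real ^ 'd) \<Rightarrow> (nat \<Rightarrow> 'z) \<Rightarrow> real \<Rightarrow> real \<Rightarrow> (nat \<Rightarrow> nat)
     \<Rightarrow> nat \<Rightarrow> real ^ 'd" where
  "sgd_w G z \<eta> g i 0 = 0"
| "sgd_w G z \<eta> g i (Suc t) =
     (if t = 0 then 0
      else soft_thr_vec (sgd_w G z \<eta> g i t - \<eta> *\<^sub>R G (sgd_w G z \<eta> g i t) (z (i t))) (g * \<eta>))"

fun sgd_what :: "(real ^ 'd \<Rightarrow> 'z \<Rightarrow> real ^ 'd) \<Rightarrow> (nat \<Rightarrow> 'z) \<Rightarrow> real \<Rightarrow> real \<Rightarrow> (nat \<Rightarrow> nat)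
     \<Rightarrow> nat \<Rightarrow> real ^ 'd" where
  "sgd_what G z \<eta> g i 0 = 0"
| "sgd_what G z \<eta> g i (Suc t) =
     (if t = 0 then 0
      else sgd_what G z \<eta> g i t
           + (1 / real (Suc t)) *\<^sub>R (sgd_w G z \<eta> g i (Suc t) - sgd_what G z \<eta> g i t))"

text \<open>Index sequences (i_1,...,i_T) in {1..n}^T, as lists; i_t = xs ! (t-1).\<close>
definition idx_seqs :: "nat \<Rightarrow> nat \<Rightarrow> nat list set" where
  "idx_seqs n T = {xs. length xs = T \<and> set xs \<subseteq> {1..n}}"

definition idx_of :: "nat list \<Rightarrow> nat \<Rightarrow> nat" where
  "idx_of xs t = xs ! (t - 1)"

text \<open>Expectation over i_1..i_T independent and uniform on {1..n}.\<close>
definition expect_idx :: "nat \<Rightarrow> nat \<Rightarrow> ((nat \<Rightarrow> nat) \<Rightarrow> real) \<Rightarrow> real" where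
  "expect_idx n T F = (\<Sum>xs\<in>idx_seqs n T. F (idx_of xs)) / real n ^ T"

end

theory Submission imports Defs begin

text \<open>
  Soft thresholding is the proximal map of the penalty g\<eta>\<parallel>\<cdot>\<parallel>_1, so each step obeys the
  three-point inequality of proximal subgradient descent: for any comparator u, the squared
  distance to u drops by 2\<eta> times the excess of L(w_t, z_{i_t}) + g\<parallel>w_{t+1}\<parallel>_1 over the same
  quantity at u, up to \<eta>^2\<parallel>\<nabla>L\<parallel>^2 \<le> \<eta>^2(A L + B); absorbing the A-part leaves the factor
  1 - A\<eta>/2, and telescoping bounds the sampled losses pathwise. As w_t depends only on
  i_1, ..., i_{t-1} and i_t is uniform, the expected sampled loss is the expected empirical
  risk, and moving the penalty from w_{t+1} back to w_t costs nothing since w_1 = 0.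
  Jensen's inequality handles the averaged iterate.
\<close>

text \<open>The residual v - T(v,a) lies in a \<partial>|\<cdot>|(T(v,a)).\<close>

lemma soft_thr_residual_subgradient:
  assumes "a \<ge> 0"
  obtains s where "v - soft_thr v a = a * s" "\<bar>s\<bar> \<le> 1" "s * soft_thr v a = \<bar>soft_thr v a\<bar>"
proof (cases "\<bar>v\<bar> \<le> a")
  case True
  then have "soft_thr v a = 0" by (auto simp: soft_thr_def)
  with True assms show ?thesis
    by (intro that[of "v / a"]) (auto simp: abs_div_pos divide_le_eq_1)
next
  case False
  then show ?thesis
    by (cases "v > 0") (auto simp: soft_thr_def intro: that[of 1] that[of "-1"])
qed

lemma soft_thr_prox_ineq:
  assumes "a \<ge> 0"
  shows "(soft_thr v a - u)\<^sup>2 \<le> (v - u)\<^sup>2 + 2 * a * (\<bar>u\<bar> - \<bar>soft_thr v a\<bar>)"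
proof -
  define x where "x = soft_thr v a"
  obtain s where v: "v = x + a * s" and s: "\<bar>s\<bar> \<le> 1" "s * x = \<bar>x\<bar>"
    using soft_thr_residual_subgradient[OF assms] unfolding x_def
    by (metis add_diff_cancel_left' diff_add_cancel)
  have "s * u \<le> \<bar>u\<bar>"
    using s(1) by (metis abs_ge_self abs_mult mult_left_le_one_le abs_ge_zero order_trans)
  then have "a * (s * u) \<le> a * \<bar>u\<bar>"
    using assms by (rule mult_left_mono)
  moreover have "(v - u)\<^sup>2 = (x - u)\<^sup>2 + 2 * a * \<bar>x\<bar> - 2 * a * (s * u) + (a * s)\<^sup>2"
    by (simp add: v s(2)[symmetric] power2_eq_square algebra_simps)
  ultimately show ?thesis
    using zero_le_power2[of "a * s"] unfolding x_def[symmetric] right_diff_distrib by linarith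
qed

lemma power2_norm_eq_sum_vec: "(norm (x :: real ^ 'n))\<^sup>2 = (\<Sum>j\<in>UNIV. (x $ j)\<^sup>2)"
  unfolding norm_vec_def L2_set_def by (simp add: sum_nonneg)

lemma soft_thr_vec_prox_ineq:
  assumes "a \<ge> 0"
  shows "(norm (soft_thr_vec v a - u))\<^sup>2
    \<le> (norm (v - u))\<^sup>2 + 2 * a * (norm1 u - norm1 (soft_thr_vec v a))"
proof -
  have "(norm (soft_thr_vec v a - u))\<^sup>2 = (\<Sum>j\<in>UNIV. (soft_thr (v $ j) a - u $ j)\<^sup>2)"
    by (simp add: power2_norm_eq_sum_vec soft_thr_vec_def)
  also have "\<dots> \<le> (\<Sum>j\<in>UNIV. (v $ j - u $ j)\<^sup>2 + 2 * a * (\<bar>u $ j\<bar> - \<bar>soft_thr (v $ j) a\<bar>))"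
    by (intro sum_mono soft_thr_prox_ineq assms)
  also have "\<dots> = (norm (v - u))\<^sup>2 + 2 * a * (norm1 u - norm1 (soft_thr_vec v a))"
    by (simp add: power2_norm_eq_sum_vec sum.distrib sum_distrib_left sum_subtractf norm1_def
        soft_thr_vec_def algebra_simps)
  finally show ?thesis .
qed

lemma prox_subgradient_step:
  fixes f :: "real ^ 'd \<Rightarrow> real"
  assumes subgrad: "is_subgradient f w v" and g: "g \<ge> 0" and eta: "\<eta> > 0"
  defines "w' \<equiv> soft_thr_vec (w - \<eta> *\<^sub>R v) (g * \<eta>)"
  shows "2 * \<eta> * (f w - f u) + 2 * \<eta> * g * norm1 w'
    \<le> (norm (w - u))\<^sup>2 - (norm (w' - u))\<^sup>2 + \<eta>\<^sup>2 * (norm v)\<^sup>2 + 2 * \<eta> * g * norm1 u"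
proof -
  have "(norm (w' - u))\<^sup>2 \<le> (norm (w - \<eta> *\<^sub>R v - u))\<^sup>2 + 2 * (g * \<eta>) * (norm1 u - norm1 w')"
    unfolding w'_def using g eta by (intro soft_thr_vec_prox_ineq) simp
  moreover have "(norm (w - \<eta> *\<^sub>R v - u))\<^sup>2
      = (norm (w - u))\<^sup>2 - 2 * \<eta> * (v \<bullet> (w - u)) + \<eta>\<^sup>2 * (norm v)\<^sup>2"
  proof -
    have "w - \<eta> *\<^sub>R v - u = (w - u) - \<eta> *\<^sub>R v" by simp
    then show ?thesis
      unfolding power2_norm_eq_inner
      by (simp add: inner_diff_left inner_diff_right inner_commute power2_eq_square algebra_simps)
  qed
  moreover have "\<eta> * (f w - f u) \<le> \<eta> * (v \<bullet> (w - u))"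
    using subgrad eta unfolding is_subgradient_def
    by (intro mult_left_mono) (auto simp: inner_diff_right algebra_simps)
  ultimately show ?thesis
    by (simp add: algebra_simps)
qed

lemma sgd_path_regret:
  fixes L :: "real ^ 'd \<Rightarrow> 'z \<Rightarrow> real" and G :: "real ^ 'd \<Rightarrow> 'z \<Rightarrow> real ^ 'd"
    and z :: "nat \<Rightarrow> 'z" and i :: "nat \<Rightarrow> nat"
  assumes subgrad: "\<And>w zz. is_subgradient (\<lambda>u. L u zz) w (G w zz)"
    and growth: "\<And>w zz. (norm (G w zz))\<^sup>2 \<le> A * L w zz + B"
    and g: "g \<ge> 0" and eta: "\<eta> > 0"
  defines "W \<equiv> sgd_w G z \<eta> g i"
  shows "2 * \<eta> * (1 - 0.5 * A * \<eta>) * (\<Sum>t=1..T. L (W t) (z (i t)))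
      + 2 * \<eta> * g * (\<Sum>t=1..T. norm1 (W (Suc t)))
    \<le> (norm u)\<^sup>2 + 2 * \<eta> * (\<Sum>t=1..T. L u (z (i t))) + real T * (\<eta>\<^sup>2 * B + 2 * \<eta> * g * norm1 u)"
proof -
  have step: "2 * \<eta> * (1 - 0.5 * A * \<eta>) * L (W t) (z (i t)) + 2 * \<eta> * g * norm1 (W (Suc t))
      \<le> (norm (W t - u))\<^sup>2 - (norm (W (Suc t) - u))\<^sup>2
        + 2 * \<eta> * L u (z (i t)) + \<eta>\<^sup>2 * B + 2 * \<eta> * g * norm1 u" if "t \<ge> 1" for t
  proof -
    let ?v = "G (W t) (z (i t))"
    have "\<eta>\<^sup>2 * (norm ?v)\<^sup>2 \<le> \<eta>\<^sup>2 * (A * L (W t) (z (i t)) + B)"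
      by (intro mult_left_mono growth) simp
    with prox_subgradient_step[OF subgrad g eta, of "W t" "z (i t)" u] that
    show ?thesis by (simp add: W_def algebra_simps power2_eq_square)
  qed
  have "2 * \<eta> * (1 - 0.5 * A * \<eta>) * (\<Sum>t=1..T. L (W t) (z (i t)))
      + 2 * \<eta> * g * (\<Sum>t=1..T. norm1 (W (Suc t))) + (norm (W (Suc T) - u))\<^sup>2
    \<le> (norm u)\<^sup>2 + 2 * \<eta> * (\<Sum>t=1..T. L u (z (i t))) + real T * (\<eta>\<^sup>2 * B + 2 * \<eta> * g * norm1 u)"
  proof (induction T)
    case 0
    show ?case by (simp add: W_def)
  next
    case (Suc T)
    with step[of "Suc T"] show ?case by (simp add: algebra_simps)
  qed
  then show ?thesis
    using zero_le_power2[of "norm (W (Suc T) - u)"] by linarith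
qed

lemma sum_le_sum_Suc_shift:
  fixes f :: "nat \<Rightarrow> real"
  assumes "f 1 \<le> f (Suc T)"
  shows "(\<Sum>t=1..T. f t) \<le> (\<Sum>t=1..T. f (Suc t))"
  using sum_Suc_diff[of 1 T f] assms by (simp add: sum_subtractf)

lemma sgd_w_cong:
  "(\<And>s. 1 \<le> s \<Longrightarrow> s < t \<Longrightarrow> i s = i' s) \<Longrightarrow> sgd_w G z \<eta> g i t = sgd_w G z \<eta> g i' t"
  by (induction t) auto

lemma sgd_what_eq_average:
  assumes "t \<ge> 1"
  shows "sgd_what G z \<eta> g i t = (1 / real t) *\<^sub>R (\<Sum>s=1..t. sgd_w G z \<eta> g i s)"
proof -
  from assms have "real t *\<^sub>R sgd_what G z \<eta> g i t = (\<Sum>s=1..t. sgd_w G z \<eta> g i s)"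
  proof (induction t rule: dec_induct)
    case (step t)
    let ?h = "sgd_what G z \<eta> g i t"
    have "real (Suc t) *\<^sub>R sgd_what G z \<eta> g i (Suc t) = real t *\<^sub>R ?h + sgd_w G z \<eta> g i (Suc t)"
      using step.hyps by (simp add: scaleR_add_right scaleR_diff_right algebra_simps)
    with step.IH show ?case by simp
  qed simp
  then have "(1 / real t) *\<^sub>R (real t *\<^sub>R sgd_what G z \<eta> g i t)
      = (1 / real t) *\<^sub>R (\<Sum>s=1..t. sgd_w G z \<eta> g i s)"
    by simp
  with assms show ?thesis by simp
qed

lemma convex_on_sum_fun:
  assumes "finite I" "\<And>i. i \<in> I \<Longrightarrow> convex_on UNIV (f i)"
  shows "convex_on UNIV (\<lambda>x. \<Sum>i\<in>I. f i x)"
  using assms by (induction I rule: finite_induct) (simp_all add: convex_on_const convex_on_add)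

lemma convex_on_norm1: "convex_on UNIV (norm1 :: real ^ 'd \<Rightarrow> real)"
proof (rule convex_onI)
  fix t :: real and x y :: "real ^ 'd" assume t: "0 < t" "t < 1"
  have "norm1 ((1 - t) *\<^sub>R x + t *\<^sub>R y) = (\<Sum>j\<in>UNIV. \<bar>(1 - t) * x $ j + t * y $ j\<bar>)"
    by (simp add: norm1_def)
  also have "\<dots> \<le> (\<Sum>j\<in>UNIV. (1 - t) * \<bar>x $ j\<bar> + t * \<bar>y $ j\<bar>)"
    using t by (intro sum_mono order_trans[OF abs_triangle_ineq]) (simp add: abs_mult)
  also have "\<dots> = (1 - t) * norm1 x + t * norm1 y"
    by (simp add: norm1_def sum.distrib sum_distrib_left)
  finally show "norm1 ((1 - t) *\<^sub>R x + t *\<^sub>R y) \<le> (1 - t) * norm1 x + t * norm1 y" .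
qed simp

lemma convex_on_emp_risk:
  assumes "\<And>zz. convex_on UNIV (\<lambda>w. L w zz)" "\<gamma> \<ge> 0"
  shows "convex_on UNIV (\<lambda>w. emp_risk L z n w \<gamma>)"
  unfolding emp_risk_def
  by (intro convex_on_add convex_on_cmul convex_on_sum_fun convex_on_norm1 assms) simp_all

lemma emp_risk_sgd_what_le_average:
  assumes "\<And>zz. convex_on UNIV (\<lambda>w. L w zz)" "\<gamma> \<ge> 0" "T \<ge> 1"
  shows "emp_risk L z n (sgd_what G z \<eta> g i T) \<gamma>
    \<le> (1 / real T) * (\<Sum>t=1..T. emp_risk L z n (sgd_w G z \<eta> g i t) \<gamma>)"
proof -
  have "emp_risk L z n (\<Sum>t\<in>{1..T}. (1 / real T) *\<^sub>R sgd_w G z \<eta> g i t) \<gamma>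
      \<le> (\<Sum>t\<in>{1..T}. (1 / real T) * emp_risk L z n (sgd_w G z \<eta> g i t) \<gamma>)"
    using assms(3) by (intro convex_on_sum[OF _ _ convex_on_emp_risk[OF assms(1,2)]]) auto
  then show ?thesis
    using assms(3) by (simp add: sgd_what_eq_average scaleR_sum_right sum_distrib_left)
qed

lemma idx_seqs_0: "idx_seqs n 0 = {[]}"
  by (auto simp: idx_seqs_def)

lemma idx_seqs_Suc: "idx_seqs n (Suc m) = (\<lambda>(xs, k). xs @ [k]) ` (idx_seqs n m \<times> {1..n})"
proof (rule set_eqI, rule iffI)
  fix ys assume ys: "ys \<in> idx_seqs n (Suc m)"
  then have "ys \<noteq> []" by (auto simp: idx_seqs_def)
  then obtain xs k where "ys = xs @ [k]" by (metis rev_exhaust)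
  with ys show "ys \<in> (\<lambda>(xs, k). xs @ [k]) ` (idx_seqs n m \<times> {1..n})"
    by (auto simp: idx_seqs_def intro!: image_eqI[where x="(xs, k)"])
qed (auto simp: idx_seqs_def)

lemma inj_on_snoc: "inj_on (\<lambda>(xs, k). xs @ [k]) X"
  by (auto simp: inj_on_def)

lemma finite_idx_seqs: "finite (idx_seqs n m)"
  by (induction m) (auto simp: idx_seqs_0 idx_seqs_Suc)

lemma card_idx_seqs: "card (idx_seqs n m) = n ^ m"
proof (induction m)
  case (Suc m)
  have "card (idx_seqs n (Suc m)) = card (idx_seqs n m \<times> {1..n})"
    unfolding idx_seqs_Suc by (rule card_image[OF inj_on_snoc])
  with Suc.IH show ?case by (simp add: card_cartesian_product)
qed (simp add: idx_seqs_0)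

lemma sum_idx_seqs_Suc:
  "(\<Sum>xs\<in>idx_seqs n (Suc m). f xs) = (\<Sum>xs\<in>idx_seqs n m. \<Sum>k=1..n. f (xs @ [k]))"
  unfolding idx_seqs_Suc sum.reindex[OF inj_on_snoc]
  by (simp add: sum.cartesian_product finite_idx_seqs split_def)

lemma sum_idx_seqs_Suc_indep_last:
  fixes f :: "nat list \<Rightarrow> real"
  assumes "\<And>xs k. xs \<in> idx_seqs n m \<Longrightarrow> f (xs @ [k]) = f xs"
  shows "(\<Sum>xs\<in>idx_seqs n (Suc m). f xs) = real n * (\<Sum>xs\<in>idx_seqs n m. f xs)"
proof -
  have "(\<Sum>xs\<in>idx_seqs n (Suc m). f xs) = (\<Sum>xs\<in>idx_seqs n m. \<Sum>k=1..n. f xs)"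
    unfolding sum_idx_seqs_Suc by (intro sum.cong refl) (simp add: assms)
  then show ?thesis by (simp add: sum_distrib_left)
qed

lemma idx_of_append: "1 \<le> s \<Longrightarrow> s \<le> length xs \<Longrightarrow> idx_of (xs @ ys) s = idx_of xs s"
  by (auto simp: idx_of_def nth_append)

text \<open>The tower property for uniform i_t when H only sees i_1, ..., i_{t-1}.\<close>

lemma sum_idx_seqs_sample:
  fixes H :: "(nat \<Rightarrow> nat) \<Rightarrow> nat \<Rightarrow> real"
  assumes past: "\<And>i i'. (\<And>s. 1 \<le> s \<Longrightarrow> s < t \<Longrightarrow> i s = i' s) \<Longrightarrow> H i = H i'"
    and t: "1 \<le> t" "t \<le> m" and n: "n \<ge> 1"
  shows "(\<Sum>xs\<in>idx_seqs n m. H (idx_of xs) (idx_of xs t))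
    = (\<Sum>xs\<in>idx_seqs n m. (1 / real n) * (\<Sum>k=1..n. H (idx_of xs) k))"
proof -
  have prefix: "H (idx_of (xs @ ys)) = H (idx_of xs)" if "t \<le> Suc (length xs)" for xs ys
    using that by (intro past) (simp add: idx_of_append)
  from t(2) show ?thesis
  proof (induction m rule: dec_induct)
    case base
    obtain m where tm: "t = Suc m" using t(1) by (cases t) auto
    have "(\<Sum>xs\<in>idx_seqs n t. H (idx_of xs) (idx_of xs t))
        = (\<Sum>xs\<in>idx_seqs n m. \<Sum>k=1..n. H (idx_of xs) k)"
    proof -
      have "H (idx_of (xs @ [k])) (idx_of (xs @ [k]) t) = H (idx_of xs) k" if "length xs = m" for xs k
        using prefix[of xs "[k]"] by (simp add: tm idx_of_def flip: that)
      then show ?thesis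
        unfolding tm sum_idx_seqs_Suc by (intro sum.cong refl) (simp add: idx_seqs_def tm)
    qed
    also have "\<dots> = real n * (\<Sum>xs\<in>idx_seqs n m. (1 / real n) * (\<Sum>k=1..n. H (idx_of xs) k))"
      using n by (simp add: sum_divide_distrib[symmetric])
    also have "\<dots> = (\<Sum>xs\<in>idx_seqs n t. (1 / real n) * (\<Sum>k=1..n. H (idx_of xs) k))"
      unfolding tm by (intro sum_idx_seqs_Suc_indep_last[symmetric]) (auto simp: idx_seqs_def prefix tm)
    finally show ?case .
  next
    case (step m)
    have "(\<Sum>xs\<in>idx_seqs n (Suc m). H (idx_of xs) (idx_of xs t))
        = real n * (\<Sum>xs\<in>idx_seqs n m. H (idx_of xs) (idx_of xs t))"
      using step.hyps t(1)
      by (intro sum_idx_seqs_Suc_indep_last) (auto simp: idx_seqs_def prefix idx_of_append)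
    also have "\<dots> = real n * (\<Sum>xs\<in>idx_seqs n m. (1 / real n) * (\<Sum>k=1..n. H (idx_of xs) k))"
      using step.IH by simp
    also have "\<dots> = (\<Sum>xs\<in>idx_seqs n (Suc m). (1 / real n) * (\<Sum>k=1..n. H (idx_of xs) k))"
      using step.hyps
      by (intro sum_idx_seqs_Suc_indep_last[symmetric]) (auto simp: idx_seqs_def prefix)
    finally show ?case .
  qed
qed

lemma expect_idx_mono: "(\<And>i. F i \<le> F' i) \<Longrightarrow> expect_idx n T F \<le> expect_idx n T F'"
  unfolding expect_idx_def by (intro divide_right_mono sum_mono) auto

lemma expect_idx_add: "expect_idx n T (\<lambda>i. F i + F' i) = expect_idx n T F + expect_idx n T F'"
  by (simp add: expect_idx_def sum.distrib add_divide_distrib)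

lemma expect_idx_cmult: "expect_idx n T (\<lambda>i. a * F i) = a * expect_idx n T F"
  by (simp add: expect_idx_def sum_distrib_left)

lemma expect_idx_sum: "expect_idx n T (\<lambda>i. \<Sum>t\<in>A. F t i) = (\<Sum>t\<in>A. expect_idx n T (F t))"
  unfolding expect_idx_def by (subst sum.swap) (simp add: sum_divide_distrib)

lemma expect_idx_const: "n \<ge> 1 \<Longrightarrow> expect_idx n T (\<lambda>i. a) = a"
  by (simp add: expect_idx_def card_idx_seqs)

lemma expect_idx_sum_sample:
  fixes H :: "nat \<Rightarrow> (nat \<Rightarrow> nat) \<Rightarrow> nat \<Rightarrow> real"
  assumes past: "\<And>t i i'. t \<in> {1..T} \<Longrightarrow> (\<And>s. 1 \<le> s \<Longrightarrow> s < t \<Longrightarrow> i s = i' s) \<Longrightarrow> H t i = H t i'"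
    and n: "n \<ge> 1"
  shows "expect_idx n T (\<lambda>i. \<Sum>t=1..T. H t i (i t))
    = expect_idx n T (\<lambda>i. \<Sum>t=1..T. (1 / real n) * (\<Sum>k=1..n. H t i k))"
proof -
  have "expect_idx n T (\<lambda>i. H t i (i t)) = expect_idx n T (\<lambda>i. (1 / real n) * (\<Sum>k=1..n. H t i k))"
    if "t \<in> {1..T}" for t
  proof -
    have "(\<Sum>xs\<in>idx_seqs n T. H t (idx_of xs) (idx_of xs t))
        = (\<Sum>xs\<in>idx_seqs n T. (1 / real n) * (\<Sum>k=1..n. H t (idx_of xs) k))"
      using that by (intro sum_idx_seqs_sample past n) auto
    then show ?thesis by (simp add: expect_idx_def)
  qed
  then show ?thesis
    unfolding expect_idx_sum by simp
qed

lemma sgd_path_regret_avg: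
  fixes L :: "real ^ 'd \<Rightarrow> 'z \<Rightarrow> real" and G :: "real ^ 'd \<Rightarrow> 'z \<Rightarrow> real ^ 'd"
    and z :: "nat \<Rightarrow> 'z" and i :: "nat \<Rightarrow> nat"
  assumes subgrad: "\<And>w zz. is_subgradient (\<lambda>u. L u zz) w (G w zz)"
    and growth: "\<And>w zz. (norm (G w zz))\<^sup>2 \<le> A * L w zz + B"
    and g: "g \<ge> 0" and eta: "\<eta> > 0" and T: "T \<ge> 1"
  defines "W \<equiv> sgd_w G z \<eta> g i"
  shows "(1 / real T) * ((1 - 0.5 * A * \<eta>) * (\<Sum>t=1..T. L (W t) (z (i t)))
      + g * (\<Sum>t=1..T. norm1 (W (Suc t))))
    \<le> (norm u)\<^sup>2 / (2 * \<eta> * real T) + (1 / real T) * (\<Sum>t=1..T. L u (z (i t)))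
      + \<eta> / 2 * B + g * norm1 u"
proof -
  let ?c = "1 - 0.5 * A * \<eta>"
  have "(1 / real T) * (?c * (\<Sum>t=1..T. L (W t) (z (i t))) + g * (\<Sum>t=1..T. norm1 (W (Suc t))))
      = (2 * \<eta> * ?c * (\<Sum>t=1..T. L (W t) (z (i t)))
         + 2 * \<eta> * g * (\<Sum>t=1..T. norm1 (W (Suc t)))) / (2 * \<eta> * real T)"
    using eta T by (simp add: field_simps)
  also have "\<dots> \<le> ((norm u)\<^sup>2 + 2 * \<eta> * (\<Sum>t=1..T. L u (z (i t)))
      + real T * (\<eta>\<^sup>2 * B + 2 * \<eta> * g * norm1 u)) / (2 * \<eta> * real T)"
    using sgd_path_regret[OF subgrad growth g eta, where z=z and i=i and T=T and u=u] eta T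
    by (intro divide_right_mono) (simp_all add: W_def)
  also have "\<dots> = (norm u)\<^sup>2 / (2 * \<eta> * real T) + (1 / real T) * (\<Sum>t=1..T. L u (z (i t)))
      + \<eta> / 2 * B + g * norm1 u"
    using eta T by (simp add: field_simps power2_eq_square)
  finally show ?thesis .
qed

text \<open>The one-step inequality charges the penalty at the next iterate; since w_1 = 0 this only
  helps.\<close>

lemma sgd_risk_le_shifted_penalty:
  fixes L :: "real ^ 'd \<Rightarrow> 'z \<Rightarrow> real" and G :: "real ^ 'd \<Rightarrow> 'z \<Rightarrow> real ^ 'd"
    and z :: "nat \<Rightarrow> 'z" and i :: "nat \<Rightarrow> nat" and \<eta> :: real
  assumes c: "c > 0" and g: "g \<ge> 0"
  defines "W \<equiv> sgd_w G z \<eta> g i"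
  shows "(c / real T) * (\<Sum>t=1..T. emp_risk L z n (W t) (g / c))
    \<le> (1 / real T) * (c * (\<Sum>t=1..T. (1 / real n) * (\<Sum>k=1..n. L (W t) (z k)))
      + g * (\<Sum>t=1..T. norm1 (W (Suc t))))"
proof -
  let ?F = "\<lambda>w. (1 / real n) * (\<Sum>k=1..n. L w (z k))"
  have "c * (\<Sum>t=1..T. emp_risk L z n (W t) (g / c))
      = c * (\<Sum>t=1..T. ?F (W t)) + g * (\<Sum>t=1..T. norm1 (W t))"
    using c by (simp add: emp_risk_def sum_distrib_left sum.distrib distrib_left)
  also have "\<dots> \<le> c * (\<Sum>t=1..T. ?F (W t)) + g * (\<Sum>t=1..T. norm1 (W (Suc t)))"
    using sum_le_sum_Suc_shift[of "\<lambda>t. norm1 (W t)" T] g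
    by (simp add: W_def norm1_def mult_left_mono)
  finally show ?thesis
    by (simp add: divide_right_mono)
qed

lemma sgd_expected_risk_le:
  fixes L :: "real ^ 'd \<Rightarrow> 'z \<Rightarrow> real" and G :: "real ^ 'd \<Rightarrow> 'z \<Rightarrow> real ^ 'd"
    and z :: "nat \<Rightarrow> 'z"
  assumes subgrad: "\<And>w zz. is_subgradient (\<lambda>u. L u zz) w (G w zz)"
    and growth: "\<And>w zz. (norm (G w zz))\<^sup>2 \<le> A * L w zz + B"
    and g: "g \<ge> 0" and eta: "\<eta> > 0" and c: "1 - 0.5 * A * \<eta> > 0"
    and n: "n \<ge> 1" and T: "T \<ge> 1"
  shows "expect_idx n T (\<lambda>i. ((1 - 0.5 * A * \<eta>) / real T) *
      (\<Sum>t=1..T. emp_risk L z n (sgd_w G z \<eta> g i t) (g / (1 - 0.5 * A * \<eta>))))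
    \<le> \<eta> / 2 * B + (norm u)\<^sup>2 / (2 * \<eta> * real T) + emp_risk L z n u g"
proof -
  define c where "c = 1 - 0.5 * A * \<eta>"
  define F where "F w = (1 / real n) * (\<Sum>k=1..n. L w (z k))" for w
  define W where "W i = sgd_w G z \<eta> g i" for i
  have sampled_risk: "expect_idx n T (\<lambda>i. \<Sum>t=1..T. L (W i t) (z (i t)))
      = expect_idx n T (\<lambda>i. \<Sum>t=1..T. F (W i t))"
    unfolding F_def W_def
    by (rule expect_idx_sum_sample[OF _ n]) (metis sgd_w_cong)
  have sampled_comparator: "expect_idx n T (\<lambda>i. \<Sum>t=1..T. L u (z (i t))) = real T * F u"
  proof -
    have "expect_idx n T (\<lambda>i. \<Sum>t=1..T. L u (z (i t))) = expect_idx n T (\<lambda>i. \<Sum>t=1..T. F u)"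
      unfolding F_def by (rule expect_idx_sum_sample[where H="\<lambda>t i k. L u (z k)", OF _ n]) simp
    then show ?thesis by (simp add: expect_idx_const[OF n])
  qed
  have "expect_idx n T (\<lambda>i. (c / real T) * (\<Sum>t=1..T. emp_risk L z n (W i t) (g / c)))
      \<le> expect_idx n T (\<lambda>i. (1 / real T) *
        (c * (\<Sum>t=1..T. F (W i t)) + g * (\<Sum>t=1..T. norm1 (W i (Suc t)))))"
    using c g unfolding F_def W_def c_def
    by (intro expect_idx_mono sgd_risk_le_shifted_penalty)
  also have "\<dots> = expect_idx n T (\<lambda>i. (1 / real T) *
      (c * (\<Sum>t=1..T. L (W i t) (z (i t))) + g * (\<Sum>t=1..T. norm1 (W i (Suc t)))))"
    by (simp only: expect_idx_add expect_idx_cmult sampled_risk)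
  also have "\<dots> \<le> expect_idx n T (\<lambda>i. (norm u)\<^sup>2 / (2 * \<eta> * real T)
      + (1 / real T) * (\<Sum>t=1..T. L u (z (i t))) + \<eta> / 2 * B + g * norm1 u)"
    unfolding W_def c_def by (intro expect_idx_mono sgd_path_regret_avg subgrad growth g eta T)
  also have "\<dots> = (norm u)\<^sup>2 / (2 * \<eta> * real T) + (1 / real T) * (real T * F u)
      + \<eta> / 2 * B + g * norm1 u"
    by (simp only: expect_idx_add expect_idx_cmult expect_idx_const[OF n] sampled_comparator)
  also have "\<dots> = \<eta> / 2 * B + (norm u)\<^sup>2 / (2 * \<eta> * real T) + emp_risk L z n u g"
    using T by (simp add: emp_risk_def F_def)
  finally show ?thesis
    by (simp add: c_def W_def)
qed

theorem theorem2:
  fixes L :: "real ^ 'd \<Rightarrow> real ^ 'e \<Rightarrow> real"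
    and G :: "real ^ 'd \<Rightarrow> real ^ 'e \<Rightarrow> real ^ 'd"
    and z :: "nat \<Rightarrow> real ^ 'e"
    and n :: nat and A B g \<eta> :: real and T :: nat and wbar :: "real ^ 'd"
  assumes dim: "CARD('e) = CARD('d) + 1"
    and convex: "\<And>zz. convex_on UNIV (\<lambda>w. L w zz)"
    and subgrad: "\<And>w zz. is_subgradient (\<lambda>u. L u zz) w (G w zz)"
    and AB: "A \<ge> 0" "B \<ge> 0"
    and growth: "\<And>w zz. (norm (G w zz))\<^sup>2 \<le> A * L w zz + B"
    and n_pos: "n \<ge> 1"
    and g_nonneg: "g \<ge> 0"
    and eta_pos: "\<eta> > 0"
    and step: "1 - 0.5 * A * \<eta> > 0"
    and T_pos: "T \<ge> 1"
  shows
    "expect_idx n T (\<lambda>i. (1 - 0.5 * A * \<eta>) *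
        emp_risk L z n (sgd_what G z \<eta> g i T) (g / (1 - 0.5 * A * \<eta>)))
     \<le> expect_idx n T (\<lambda>i. ((1 - 0.5 * A * \<eta>) / real T) *
        (\<Sum>t=1..T. emp_risk L z n (sgd_w G z \<eta> g i t) (g / (1 - 0.5 * A * \<eta>))))
   \<and> expect_idx n T (\<lambda>i. ((1 - 0.5 * A * \<eta>) / real T) *
        (\<Sum>t=1..T. emp_risk L z n (sgd_w G z \<eta> g i t) (g / (1 - 0.5 * A * \<eta>))))
     \<le> \<eta> / 2 * B + (norm wbar)\<^sup>2 / (2 * \<eta> * real T) + emp_risk L z n wbar g"
proof
  define c where "c = 1 - 0.5 * A * \<eta>"
  have "c * emp_risk L z n (sgd_what G z \<eta> g i T) (g / c)
      \<le> (c / real T) * (\<Sum>t=1..T. emp_risk L z n (sgd_w G z \<eta> g i t) (g / c))" for i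
    using mult_left_mono[OF emp_risk_sgd_what_le_average[OF convex _ T_pos], of "g / c" c] step g_nonneg
    by (simp add: c_def)
  then show "expect_idx n T (\<lambda>i. (1 - 0.5 * A * \<eta>) *
        emp_risk L z n (sgd_what G z \<eta> g i T) (g / (1 - 0.5 * A * \<eta>)))
     \<le> expect_idx n T (\<lambda>i. ((1 - 0.5 * A * \<eta>) / real T) *
        (\<Sum>t=1..T. emp_risk L z n (sgd_w G z \<eta> g i t) (g / (1 - 0.5 * A * \<eta>))))"
    unfolding c_def by (intro expect_idx_mono)
qed (rule sgd_expected_risk_le[OF subgrad growth g_nonneg eta_pos step n_pos T_pos])

end
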